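(* Let $R$ be a commutative ring and $f,g\in R$. If $\operatorname{Ann}(f)$ and $\operatorname{Ann}(g)$ are pure ideals of $R$, then $\operatorname{Ann}(fg)$ is a pure ideal of $R$.
   Context: An ideal $I$ of $R$ is pure if the canonical map $R\to R/I$ is flat; equivalently, for each $f\in I$ there exists $g\in I$ with $f(1-g)=0$. *)

theory Defs
  imports Main
begin

definition Ann :: "'a::comm_ring_1 \<Rightarrow> 'a set" where
  "Ann f = {x. x * f = 0}"

definition is_ideal :: "'a::comm_ring_1 set \<Rightarrow> bool" where
  "is_ideal I \<longleftrightarrow> 0 \<in> I \<and> (\<forall>x\<in>I. \<forall>y\<in>I. x + y \<in> I) \<and> (\<forall>r. \<forall>x\<in>I. r * x \<in> I)"

text \<open>Pure ideal, via the elementwise characterization given in the paper: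
  for each f in I there is g in I with f(1-g) = 0.\<close>
definition pure_ideal :: "'a::comm_ring_1 set \<Rightarrow> bool" where
  "pure_ideal I \<longleftrightarrow> is_ideal I \<and> (\<forall>f\<in>I. \<exists>g\<in>I. f * (1 - g) = 0)"

end

theory Submission
  imports Defs
begin

text \<open>For x in Ann(fg), purity of Ann(f) applied to xg gives a in Ann(f) with xg(1-a) = 0; then
  x(1-a) lies in Ann(g), and purity of Ann(g) gives b in Ann(g) with x(1-a)(1-b) = 0. The element
  h = 1 - (1-a)(1-b) = a + b - ab annihilates fg and satisfies x(1-h) = 0.\<close>

lemma is_ideal_Ann: "is_ideal (Ann (f::'a::comm_ring_1))"
  unfolding is_ideal_def Ann_def by (auto simp: algebra_simps)

lemma pure_ideal_Ann_iff:
  "pure_ideal (Ann f) \<longleftrightarrow> (\<forall>x\<in>Ann f. \<exists>a\<in>Ann f. x * (1 - a) = 0)"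
  by (simp add: pure_ideal_def is_ideal_Ann)

lemma Ann_mult_iff: "x \<in> Ann (f * g) \<longleftrightarrow> x * g \<in> Ann f"
  by (simp add: Ann_def algebra_simps)

lemma complement_mult_mem_Ann_mult:
  assumes "a \<in> Ann f" and "b \<in> Ann g"
  shows "1 - (1 - a) * (1 - b) \<in> Ann (f * g)"
proof -
  have "(1 - (1 - a) * (1 - b)) * (f * g) = (a * f) * g + (b * g) * f - (a * f) * (b * g)"
    by (simp add: algebra_simps)
  with assms show ?thesis
    by (simp add: Ann_def)
qed

theorem lemma2p11:
  fixes f g :: "'a::comm_ring_1"
  assumes "pure_ideal (Ann f)" and "pure_ideal (Ann g)"
  shows "pure_ideal (Ann (f * g))"
  unfolding pure_ideal_Ann_iff
proof
  fix x assume "x \<in> Ann (f * g)"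
  then have "x * g \<in> Ann f"
    by (simp add: Ann_mult_iff)
  then obtain a where a: "a \<in> Ann f" "x * g * (1 - a) = 0"
    using assms(1) by (auto simp: pure_ideal_Ann_iff)
  then have "x * (1 - a) \<in> Ann g"
    by (simp add: Ann_def algebra_simps)
  then obtain b where b: "b \<in> Ann g" "x * (1 - a) * (1 - b) = 0"
    using assms(2) by (auto simp: pure_ideal_Ann_iff)
  have "x * (1 - (1 - (1 - a) * (1 - b))) = 0"
    using b(2) by (simp add: algebra_simps)
  with complement_mult_mem_Ann_mult[OF a(1) b(1)]
  show "\<exists>h\<in>Ann (f * g). x * (1 - h) = 0" by blast
qed

end
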